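(* The collection $\mathrm{Cov}(\mathrm{St}\mathbb{C}^n)$ of covering families makes the category $\mathrm{St}\mathbb{C}^n$ into a Verdier site.
   Context: $\mathrm{St}\mathbb{C}^n$ is the category whose objects are $n$-dimensional Stein manifolds that are biholomorphic to an open subset of $\mathbb{C}^n$ (the empty manifold is included as an initial object, so that "empty pullbacks" exist), and whose morphisms are holomorphic embeddings, i.e. holomorphic maps that are biholomorphisms onto their (open) image. A family $\{U_i \xrightarrow{f_i} U\}_{i\in I}$ of morphisms of $\mathrm{St}\mathbb{C}^n$ is a covering family if $\bigcup_{i\in I} f_i(U_i) = U$; $\mathrm{Cov}(\mathrm{St}\mathbb{C}^n)$ denotes the collection of all covering families. A site is a category $\mathscr{C}$ with a collection $\mathrm{Cov}(\mathscr{C})$ of families $\{U_i\to U\}_{i\in I}$ of morphisms such that: (i) for every isomorphism $f:U'\to U$, $\{f\}$ is in $\mathrm{Cov}(\mathscr{C})$; (ii) if $\{U_i\to U\}_{i\in I}\in\mathrm{Cov}(\mathscr{C})$ and for each $i$, $\{V_{i,j}\to U_i\}_{j\in J_i}\in \mathrm{Cov}(\mathscr{C})$, then $\{V_{i,j}\to U_i\to U\}_{i,j}\in\mathrm{Cov}(\mathscr{C})$; (iii) if $\{U_i\to U\}_{i\in I}\in\mathrm{Cov}(\mathscr{C})$ and $V\to U$ is any morphism, then the fibre products $U_i\times_U V$ exist in $\mathscr{C}$ and $\{U_i\times_U V\to V\}_{i\in I}\in\mathrm{Cov}(\mathscr{C})$. A morphism is basal if it belongs to some covering family; a Verdier site is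 a site such that additionally (iv) for every basal morphism $V\to U$, the diagonal $V\to V\times_U V$ is basal. *)

theory Defs
  imports "HOL-Analysis.Analysis"
begin

type_synonym 'n cpt = "complex ^ 'n"

definition holo_fun :: "('n::finite cpt \<Rightarrow> complex) \<Rightarrow> 'n cpt set \<Rightarrow> bool" where
  "holo_fun f U \<longleftrightarrow>
     (\<forall>x\<in>U. \<exists>L. (f has_derivative L) (at x) \<and> (\<forall>(c::complex) v. L (c *s v) = c * L v))"

definition holo_map :: "('n::finite cpt \<Rightarrow> 'm::finite cpt) \<Rightarrow> 'n cpt set \<Rightarrow> bool" where
  "holo_map f U \<longleftrightarrow> (\<forall>i. holo_fun (\<lambda>z. f z $ i) U)"

definition holo_hull :: "'n::finite cpt set \<Rightarrow> 'n cpt set \<Rightarrow> 'n cpt set" where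
  "holo_hull U K = {z \<in> U. \<forall>f. holo_fun f U \<longrightarrow>
        (\<forall>b::real. (\<forall>w\<in>K. cmod (f w) \<le> b) \<longrightarrow> cmod (f z) \<le> b)}"

text \<open>An open subset of C^n which is a Stein manifold: holomorphically convex and
  holomorphically separable (local coordinates are automatic for open subsets of C^n).\<close>
definition stein_open :: "'n::finite cpt set \<Rightarrow> bool" where
  "stein_open U \<longleftrightarrow> open U \<and>
     (\<forall>K. compact K \<and> K \<subseteq> U \<longrightarrow> compact (holo_hull U K)) \<and>
     (\<forall>x\<in>U. \<forall>y\<in>U. x \<noteq> y \<longrightarrow> (\<exists>f. holo_fun f U \<and> f x \<noteq> f y))"

text \<open>Morphisms W \<rightarrow> U of StC^n: holomorphic embeddings (biholomorphic onto open image).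
  A morphism is represented by a map on C^n; only its values on W matter.\<close>
definition hemb :: "'n::finite cpt set \<Rightarrow> 'n cpt set \<Rightarrow> ('n cpt \<Rightarrow> 'n cpt) \<Rightarrow> bool" where
  "hemb W U f \<longleftrightarrow> stein_open W \<and> stein_open U \<and> holo_map f W \<and> f ` W \<subseteq> U \<and> inj_on f W \<and>
     open (f ` W) \<and> (\<exists>g. holo_map g (f ` W) \<and> (\<forall>x\<in>W. g (f x) = x))"

definition hiso :: "'n::finite cpt set \<Rightarrow> 'n cpt set \<Rightarrow> ('n cpt \<Rightarrow> 'n cpt) \<Rightarrow> bool" where
  "hiso W U f \<longleftrightarrow> hemb W U f \<and>
     (\<exists>g. hemb U W g \<and> (\<forall>x\<in>W. g (f x) = x) \<and> (\<forall>y\<in>U. f (g y) = y))"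

definition covering :: "'n::finite cpt set \<Rightarrow> ('n cpt set \<times> ('n cpt \<Rightarrow> 'n cpt)) set \<Rightarrow> bool" where
  "covering U F \<longleftrightarrow> stein_open U \<and> (\<forall>(W, g)\<in>F. hemb W U g) \<and> (\<Union>(W, g)\<in>F. g ` W) = U"

definition basal :: "'n::finite cpt set \<Rightarrow> 'n cpt set \<Rightarrow> ('n cpt \<Rightarrow> 'n cpt) \<Rightarrow> bool" where
  "basal V U f \<longleftrightarrow> (\<exists>F. (V, f) \<in> F \<and> covering U F)"

text \<open>(P, p1, p2) is a fibre product of f1 : U1 \<rightarrow> U and f2 : U2 \<rightarrow> U in StC^n
  (morphisms being equal iff they agree on their domain).\<close>
definition is_pullback ::
  "'n::finite cpt set \<Rightarrow> 'n cpt set \<Rightarrow> ('n cpt \<Rightarrow> 'n cpt) \<Rightarrow> 'n cpt set \<Rightarrow> ('n cpt \<Rightarrow> 'n cpt)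
   \<Rightarrow> 'n cpt set \<Rightarrow> ('n cpt \<Rightarrow> 'n cpt) \<Rightarrow> ('n cpt \<Rightarrow> 'n cpt) \<Rightarrow> bool" where
  "is_pullback U U1 f1 U2 f2 P p1 p2 \<longleftrightarrow>
     hemb U1 U f1 \<and> hemb U2 U f2 \<and> hemb P U1 p1 \<and> hemb P U2 p2 \<and>
     (\<forall>x\<in>P. f1 (p1 x) = f2 (p2 x)) \<and>
     (\<forall>W g1 g2. hemb W U1 g1 \<and> hemb W U2 g2 \<and> (\<forall>x\<in>W. f1 (g1 x) = f2 (g2 x)) \<longrightarrow>
        (\<exists>h. hemb W P h \<and> (\<forall>x\<in>W. p1 (h x) = g1 x) \<and> (\<forall>x\<in>W. p2 (h x) = g2 x) \<and>
             (\<forall>h'. hemb W P h' \<and> (\<forall>x\<in>W. p1 (h' x) = g1 x) \<and> (\<forall>x\<in>W. p2 (h' x) = g2 x)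
                   \<longrightarrow> (\<forall>x\<in>W. h' x = h x))))"

definition StC_site_iso :: "'n::finite itself \<Rightarrow> bool" where
  "StC_site_iso _ \<longleftrightarrow> (\<forall>(U'::'n cpt set) U f. hiso U' U f \<longrightarrow> covering U {(U', f)})"

definition StC_site_comp :: "'n::finite itself \<Rightarrow> bool" where
  "StC_site_comp _ \<longleftrightarrow> (\<forall>(U::'n cpt set) F G.
     covering U F \<and> (\<forall>(Ui, fi)\<in>F. covering Ui (G (Ui, fi))) \<longrightarrow>
     covering U {(W, fi \<circ> g) | Ui fi W g. (Ui, fi) \<in> F \<and> (W, g) \<in> G (Ui, fi)})"

definition StC_site_pullback :: "'n::finite itself \<Rightarrow> bool" where
  "StC_site_pullback _ \<longleftrightarrow> (\<forall>(U::'n cpt set) F V g.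
     covering U F \<and> hemb V U g \<longrightarrow>
     (\<forall>(Ui, fi)\<in>F. \<exists>P p1 p2. is_pullback U Ui fi V g P p1 p2) \<and>
     (\<forall>P p1 p2. (\<forall>(Ui, fi)\<in>F. is_pullback U Ui fi V g (P (Ui, fi)) (p1 (Ui, fi)) (p2 (Ui, fi)))
        \<longrightarrow> covering V {(P (Ui, fi), p2 (Ui, fi)) | Ui fi. (Ui, fi) \<in> F}))"

definition StC_verdier_diag :: "'n::finite itself \<Rightarrow> bool" where
  "StC_verdier_diag _ \<longleftrightarrow> (\<forall>(V::'n cpt set) U f P p1 p2 d.
     basal V U f \<and> is_pullback U V f V f P p1 p2 \<and>
     hemb V P d \<and> (\<forall>x\<in>V. p1 (d x) = x) \<and> (\<forall>x\<in>V. p2 (d x) = x) \<longrightarrow> basal V P d)"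

definition StC_verdier_site :: "'n::finite itself \<Rightarrow> bool" where
  "StC_verdier_site T \<longleftrightarrow> StC_site_iso T \<and> StC_site_comp T \<and> StC_site_pullback T \<and> StC_verdier_diag T"

end

theory Submission
  imports Defs
begin

text \<open>
  Three of the four axioms are formal properties of holomorphic embeddings: they compose, an
  isomorphism is a one-member cover, and every morphism is a monomorphism, so a diagonal
  \<open>V \<rightarrow> V \<times>\<^sub>U V\<close> is a section of a monomorphism and hence an isomorphism.
  The pullback of \<open>f\<^sub>i : U\<^sub>i \<rightarrow> U\<close> along \<open>g : V \<rightarrow> U\<close> is the open set
  \<open>P = V \<inter> g\<^sup>-\<^sup>1(f\<^sub>i(U\<^sub>i))\<close>, and the only analytic point is that \<open>P\<close> is again Stein.
  Via \<open>\<phi> = f\<^sub>i\<^sup>-\<^sup>1 \<circ> g\<close> the hull of a compact \<open>K \<subseteq> P\<close> lies in the hull of \<open>K\<close> in \<open>V\<close>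
  intersected with \<open>\<phi>\<^sup>-\<^sup>1\<close> of the hull of \<open>\<phi>(K)\<close> in \<open>U\<^sub>i\<close>, a compact subset of \<open>P\<close>.
\<close>

lemma has_derivative_vec_lambda:
  fixes f :: "'a::euclidean_space \<Rightarrow> 'b::real_normed_vector ^ 'm::finite"
  assumes "\<And>i. ((\<lambda>z. f z $ i) has_derivative L i) (at x)"
  shows "(f has_derivative (\<lambda>v. \<chi> i. L i v)) (at x)"
proof -
  have "linear (L i)" for i
    using assms has_derivative_bounded_linear bounded_linear.linear by blast
  then have "linear (\<lambda>v. \<chi> i. L i v)"
    by (simp add: linear_iff vec_eq_iff)
  then have "bounded_linear (\<lambda>v. \<chi> i. L i v)"
    by (simp add: linear_conv_bounded_linear)
  moreover have "((\<lambda>y. ((f y - f x) - (\<chi> i. L i (y - x))) /\<^sub>R norm (y - x)) \<longlongrightarrow> 0) (at x)"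
  proof (rule vec_tendstoI)
    fix i
    have "((\<lambda>y. ((f y $ i - f x $ i) - L i (y - x)) /\<^sub>R norm (y - x)) \<longlongrightarrow> 0) (at x)"
      using assms[of i] by (simp add: has_derivative_at_within[where s=UNIV, simplified])
    then show "((\<lambda>y. (((f y - f x) - (\<chi> i. L i (y - x))) /\<^sub>R norm (y - x)) $ i) \<longlongrightarrow> 0 $ i) (at x)"
      by simp
  qed
  ultimately show ?thesis
    by (simp add: has_derivative_at_within[where s=UNIV, simplified])
qed

lemma holo_map_has_derivative:
  assumes "holo_map g V" "x \<in> V"
  obtains M where "(g has_derivative M) (at x)" "\<And>c v. M (c *s v) = c *s M v"
proof -
  have "\<forall>i. \<exists>L. ((\<lambda>z. g z $ i) has_derivative L) (at x) \<and> (\<forall>(c::complex) v. L (c *s v) = c * L v)"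
    using assms unfolding holo_map_def holo_fun_def by blast
  then obtain L where L: "\<And>i. ((\<lambda>z. g z $ i) has_derivative L i) (at x)"
    "\<And>i c v. L i (c *s v) = c * L i v" by metis
  have "\<forall>c v. (\<chi> i. L i (c *s v)) = c *s (\<chi> i. L i v)"
    using L(2) by (simp add: vec_eq_iff)
  then show ?thesis
    using that[OF has_derivative_vec_lambda[OF L(1)]] by blast
qed

lemma holo_fun_compose:
  assumes "holo_map g V" "holo_fun f W" "g ` V \<subseteq> W"
  shows "holo_fun (\<lambda>z. f (g z)) V"
  unfolding holo_fun_def
proof
  fix x assume x: "x \<in> V"
  obtain M where M: "(g has_derivative M) (at x)" "\<And>c v. M (c *s v) = c *s M v"
    using holo_map_has_derivative[OF assms(1) x] by blast
  obtain L where L: "(f has_derivative L) (at (g x))" "\<forall>(c::complex) v. L (c *s v) = c * L v"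
    using assms(2,3) x unfolding holo_fun_def by blast
  have "((\<lambda>z. f (g z)) has_derivative (\<lambda>v. L (M v))) (at x)"
    using diff_chain_at[OF M(1) L(1)] by (simp add: o_def)
  moreover have "\<forall>(c::complex) v. L (M (c *s v)) = c * L (M v)"
    by (simp add: M(2) L(2))
  ultimately show "\<exists>L. ((\<lambda>z. f (g z)) has_derivative L) (at x) \<and> (\<forall>(c::complex) v. L (c *s v) = c * L v)"
    by (intro exI[where x="\<lambda>v. L (M v)"] conjI)
qed

lemma holo_map_compose:
  assumes "holo_map g V" "holo_map f W" "g ` V \<subseteq> W"
  shows "holo_map (\<lambda>z. f (g z)) V"
  unfolding holo_map_def
proof
  fix i
  have "holo_fun (\<lambda>w. f w $ i) W"
    using assms(2) unfolding holo_map_def ..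
  then show "holo_fun (\<lambda>z. f (g z) $ i) V"
    by (rule holo_fun_compose[OF assms(1) _ assms(3)])
qed

lemma holo_fun_subset: "holo_fun f U \<Longrightarrow> W \<subseteq> U \<Longrightarrow> holo_fun f W"
  unfolding holo_fun_def by blast

lemma holo_map_subset: "holo_map f U \<Longrightarrow> W \<subseteq> U \<Longrightarrow> holo_map f W"
  unfolding holo_map_def using holo_fun_subset by blast

lemma holo_map_id: "holo_map (\<lambda>z. z) U"
  unfolding holo_map_def holo_fun_def
  by (auto intro!: exI[where x="\<lambda>v. v $ _"] bounded_linear_imp_has_derivative)

lemma holo_fun_const: "holo_fun (\<lambda>z. c) U"
  unfolding holo_fun_def by (auto intro!: exI[where x="\<lambda>v. 0"])

lemma continuous_on_holo_fun: "holo_fun f U \<Longrightarrow> continuous_on U f"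
  unfolding holo_fun_def
  by (meson continuous_at_imp_continuous_on has_derivative_continuous)

lemma continuous_on_holo_map:
  assumes "holo_map f U" shows "continuous_on U f"
proof -
  have "continuous_on U (\<lambda>x. \<chi> i. f x $ i)"
    using assms continuous_on_holo_fun unfolding holo_map_def by (intro continuous_on_vec_lambda) blast
  then show ?thesis by simp
qed

lemma holo_hull_subset: "holo_hull U K \<subseteq> U"
  unfolding holo_hull_def by blast

lemma holo_hull_mono_domain: "P \<subseteq> V \<Longrightarrow> holo_hull P K \<subseteq> holo_hull V K"
  unfolding holo_hull_def using holo_fun_subset by blast

lemma holo_hull_image:
  assumes "holo_map \<phi> P" "\<phi> ` P \<subseteq> U"
  shows "\<phi> ` holo_hull P K \<subseteq> holo_hull U (\<phi> ` K)"
proof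
  fix y assume "y \<in> \<phi> ` holo_hull P K"
  then obtain z where z: "z \<in> holo_hull P K" "y = \<phi> z"
    by blast
  have "z \<in> P" and bound: "\<And>g c. holo_fun g P \<Longrightarrow> \<forall>w\<in>K. cmod (g w) \<le> c \<Longrightarrow> cmod (g z) \<le> c"
    using z(1) unfolding holo_hull_def by auto
  have "cmod (f (\<phi> z)) \<le> b" if "holo_fun f U" "\<forall>w\<in>K. cmod (f (\<phi> w)) \<le> b" for f b
    using bound[OF holo_fun_compose[OF assms(1) that(1) assms(2)]] that(2) by blast
  moreover have "\<phi> z \<in> U"
    using \<open>z \<in> P\<close> assms(2) by blast
  ultimately show "y \<in> holo_hull U (\<phi> ` K)"
    unfolding holo_hull_def z(2) by simp
qed

lemma closedin_holo_hull: "closedin (top_of_set P) (holo_hull P K)"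
proof -
  define I where "I = {(f, b). holo_fun f P \<and> (\<forall>w\<in>K. cmod (f w) \<le> (b::real))}"
  have "I \<noteq> {}"
    unfolding I_def using holo_fun_const[of 0 P] by auto
  moreover have "closedin (top_of_set P) (P \<inter> (\<lambda>z. cmod (f z)) -` {..b})" if "(f, b) \<in> I" for f b
    using that unfolding I_def
    by (auto intro: continuous_closedin_preimage continuous_on_norm continuous_on_holo_fun)
  ultimately have "closedin (top_of_set P) (\<Inter>(f, b)\<in>I. P \<inter> (\<lambda>z. cmod (f z)) -` {..b})"
    by (intro closedin_INT) auto
  moreover have "holo_hull P K = (\<Inter>(f, b)\<in>I. P \<inter> (\<lambda>z. cmod (f z)) -` {..b})"
    using \<open>I \<noteq> {}\<close> unfolding holo_hull_def I_def by auto
  ultimately show ?thesis by simp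
qed

lemma stein_open_subdomain:
  assumes V: "stein_open V" and U: "stein_open U" and P: "open P" "P \<subseteq> V"
    and \<phi>: "holo_map \<phi> P" "\<phi> ` P \<subseteq> U"
    and closed_fibres: "\<And>C. compact C \<Longrightarrow> C \<subseteq> U \<Longrightarrow> closedin (top_of_set V) {z \<in> P. \<phi> z \<in> C}"
  shows "stein_open P"
proof -
  have "compact (holo_hull P K)" if K: "compact K" "K \<subseteq> P" for K
  proof -
    have "compact (\<phi> ` K)"
      using K continuous_on_subset[OF continuous_on_holo_map[OF \<phi>(1)]] compact_continuous_image by blast
    then have hull_U: "compact (holo_hull U (\<phi> ` K))"
      using U K \<phi>(2) unfolding stein_open_def by blast
    have hull_V: "compact (holo_hull V K)"
      using V K P(2) unfolding stein_open_def by blast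
    define S where "S = holo_hull V K \<inter> {z \<in> P. \<phi> z \<in> holo_hull U (\<phi> ` K)}"
    have "closedin (top_of_set V) {z \<in> P. \<phi> z \<in> holo_hull U (\<phi> ` K)}"
      using closed_fibres[OF hull_U holo_hull_subset] .
    then obtain T where "closed T" "{z \<in> P. \<phi> z \<in> holo_hull U (\<phi> ` K)} = V \<inter> T"
      unfolding closedin_closed by blast
    then have "S = holo_hull V K \<inter> T"
      unfolding S_def using holo_hull_subset[of V] by blast
    then have "compact S"
      using hull_V \<open>closed T\<close> compact_Int_closed by blast
    moreover have "holo_hull P K \<subseteq> S"
    proof
      fix z assume z: "z \<in> holo_hull P K"
      then have "z \<in> holo_hull V K" "z \<in> P" "\<phi> z \<in> holo_hull U (\<phi> ` K)"
        using holo_hull_mono_domain[OF P(2)] holo_hull_subset holo_hull_image[OF \<phi>] by blast+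
      then show "z \<in> S"
        unfolding S_def by blast
    qed
    moreover have "S \<subseteq> P"
      unfolding S_def by blast
    ultimately show ?thesis
      using closedin_holo_hull closedin_subset_trans closedin_compact by metis
  qed
  moreover have "\<exists>f. holo_fun f P \<and> f x \<noteq> f y" if "x \<in> P" "y \<in> P" "x \<noteq> y" for x y
    using V that P(2) holo_fun_subset[OF _ P(2)] unfolding stein_open_def by blast
  ultimately show ?thesis
    using P(1) unfolding stein_open_def by blast
qed

lemma continuous_on_hemb: "hemb W U f \<Longrightarrow> continuous_on W f"
  unfolding hemb_def using continuous_on_holo_map by blast

lemma hemb_open_image:
  assumes "hemb W U f" "A \<subseteq> W" "open A"
  shows "open (f ` A)"
proof -
  obtain finv where finv: "holo_map finv (f ` W)" "\<forall>x\<in>W. finv (f x) = x" and "open (f ` W)"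
    using assms(1) unfolding hemb_def by blast
  have "f ` A = finv -` A \<inter> f ` W"
    using assms(2) finv(2) by force
  moreover have "open (finv -` A \<inter> f ` W)"
    using continuous_on_holo_map[OF finv(1)] \<open>open (f ` W)\<close> assms(3) continuous_on_open_vimage
    by blast
  ultimately show ?thesis
    by simp
qed

lemma hemb_compose:
  assumes g: "hemb W V g" and f: "hemb V U f"
  shows "hemb W U (\<lambda>x. f (g x))"
proof -
  obtain ginv where ginv: "holo_map ginv (g ` W)" "\<forall>x\<in>W. ginv (g x) = x"
    using g unfolding hemb_def by blast
  obtain finv where finv: "holo_map finv (f ` V)" "\<forall>x\<in>V. finv (f x) = x"
    using f unfolding hemb_def by blast
  have gW: "g ` W \<subseteq> V" "open (g ` W)" "inj_on g W" "holo_map g W" "stein_open W"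
    using g unfolding hemb_def by auto
  have fV: "f ` V \<subseteq> U" "inj_on f V" "holo_map f V" "stein_open U"
    using f unfolding hemb_def by auto
  have "holo_map (\<lambda>x. f (g x)) W"
    using holo_map_compose[OF gW(4) fV(3) gW(1)] .
  moreover have "(\<lambda>x. f (g x)) ` W \<subseteq> U"
    using gW(1) fV(1) by auto
  moreover have "inj_on (\<lambda>x. f (g x)) W"
    using comp_inj_on[OF gW(3) inj_on_subset[OF fV(2) gW(1)]] by (simp add: o_def)
  moreover have "open ((\<lambda>x. f (g x)) ` W)"
    using hemb_open_image[OF f gW(1,2)] by (simp add: image_image)
  moreover have "holo_map (\<lambda>y. ginv (finv y)) ((\<lambda>x. f (g x)) ` W)"
  proof (rule holo_map_compose[OF _ ginv(1)])
    show "holo_map finv ((\<lambda>x. f (g x)) ` W)"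
      by (rule holo_map_subset[OF finv(1)]) (use gW in auto)
    show "finv ` (\<lambda>x. f (g x)) ` W \<subseteq> g ` W"
      using finv(2) gW(1) by auto
  qed
  moreover have "\<forall>x\<in>W. ginv (finv (f (g x))) = x"
    using ginv(2) finv(2) gW(1) by auto
  ultimately show ?thesis
    unfolding hemb_def using gW(5) fV(4) by blast
qed

lemma hemb_restrict_codomain:
  "hemb W V h \<Longrightarrow> stein_open P \<Longrightarrow> h ` W \<subseteq> P \<Longrightarrow> hemb W P h"
  unfolding hemb_def by blast

lemma hemb_inclusion:
  assumes "stein_open P" "stein_open V" "P \<subseteq> V"
  shows "hemb P V (\<lambda>z. z)"
  using assms holo_map_id stein_open_def unfolding hemb_def by auto

lemma hemb_section_surj:
  assumes p: "hemb P V p" and d: "hemb V P d" and pd: "\<forall>x\<in>V. p (d x) = x"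
  shows "d ` V = P"
proof
  show "d ` V \<subseteq> P"
    using d unfolding hemb_def by blast
  show "P \<subseteq> d ` V"
  proof
    fix x assume "x \<in> P"
    then have "p x \<in> V" "d (p x) \<in> P"
      using p d unfolding hemb_def by blast+
    moreover have "p (d (p x)) = p x"
      using pd \<open>p x \<in> V\<close> by blast
    ultimately have "d (p x) = x"
      using p \<open>x \<in> P\<close> unfolding hemb_def inj_on_def by blast
    then show "x \<in> d ` V"
      using \<open>p x \<in> V\<close> by (metis image_eqI)
  qed
qed

lemma covering_singleton:
  "hemb W U f \<Longrightarrow> f ` W = U \<Longrightarrow> covering U {(W, f)}"
  unfolding covering_def hemb_def by auto

lemma stein_open_pullback:
  assumes fi: "hemb Ui U fi" and g: "hemb V U g"
    and finv: "holo_map finv (fi ` Ui)" "\<forall>x\<in>Ui. finv (fi x) = x"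
  shows "stein_open {v \<in> V. g v \<in> fi ` Ui}"
proof (rule stein_open_subdomain[where \<phi> = "\<lambda>z. finv (g z)"])
  show V: "stein_open V" and "stein_open Ui"
    using fi g unfolding hemb_def by auto
  have "{v \<in> V. g v \<in> fi ` Ui} = g -` (fi ` Ui) \<inter> V"
    by blast
  moreover have "open (fi ` Ui)" "open V"
    using fi V unfolding hemb_def stein_open_def by auto
  ultimately show "open {v \<in> V. g v \<in> fi ` Ui}"
    using continuous_on_hemb[OF g] continuous_on_open_vimage by metis
  show P: "{v \<in> V. g v \<in> fi ` Ui} \<subseteq> V"
    by blast
  show "holo_map (\<lambda>z. finv (g z)) {v \<in> V. g v \<in> fi ` Ui}"
    using g holo_map_compose[OF holo_map_subset[OF _ P] finv(1)] unfolding hemb_def by blast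
  show "(\<lambda>z. finv (g z)) ` {v \<in> V. g v \<in> fi ` Ui} \<subseteq> Ui"
    using finv(2) by auto
  fix C assume C: "compact C" "C \<subseteq> Ui"
  then have "closed (fi ` C)"
    using continuous_on_subset[OF continuous_on_hemb[OF fi]] compact_continuous_image compact_imp_closed
    by blast
  then have "closedin (top_of_set V) (V \<inter> g -` (fi ` C))"
    using continuous_closedin_preimage continuous_on_hemb[OF g] by blast
  moreover have "{z \<in> {v \<in> V. g v \<in> fi ` Ui}. finv (g z) \<in> C} = V \<inter> g -` (fi ` C)"
    using C(2) finv(2) by force
  ultimately show "closedin (top_of_set V) {z \<in> {v \<in> V. g v \<in> fi ` Ui}. finv (g z) \<in> C}"
    by simp
qed

lemma hemb_pullback_proj:
  assumes fi: "hemb Ui U fi" and g: "hemb V U g"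
    and finv: "holo_map finv (fi ` Ui)" "\<forall>x\<in>Ui. finv (fi x) = x"
  shows "hemb {v \<in> V. g v \<in> fi ` Ui} Ui (\<lambda>z. finv (g z))"
proof -
  define P where "P = {v \<in> V. g v \<in> fi ` Ui}"
  obtain ginv where ginv: "holo_map ginv (g ` V)" "\<forall>x\<in>V. ginv (g x) = x"
    using g unfolding hemb_def by blast
  have Ui: "stein_open Ui" "open Ui" "holo_map fi Ui"
    and V: "open (g ` V)" "holo_map g V" "inj_on g V"
    using fi g unfolding hemb_def stein_open_def by auto
  have g_eq: "fi (finv (g x)) = g x" if "x \<in> P" for x
    using that finv(2) unfolding P_def by auto
  have image: "(\<lambda>z. finv (g z)) ` P = fi -` (g ` V) \<inter> Ui"
  proof
    show "(\<lambda>z. finv (g z)) ` P \<subseteq> fi -` (g ` V) \<inter> Ui"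
      using g_eq finv(2) unfolding P_def by force
    show "fi -` (g ` V) \<inter> Ui \<subseteq> (\<lambda>z. finv (g z)) ` P"
      using finv(2) unfolding P_def by force
  qed
  have "holo_map (\<lambda>z. finv (g z)) P"
    by (rule holo_map_compose[OF holo_map_subset[OF V(2)] finv(1)]) (auto simp: P_def)
  moreover have "inj_on (\<lambda>z. finv (g z)) P"
    using g_eq V(3) unfolding inj_on_def P_def by (metis (no_types, lifting) mem_Collect_eq)
  moreover have "open ((\<lambda>z. finv (g z)) ` P)"
    unfolding image using continuous_on_hemb[OF fi] Ui(2) V(1) continuous_on_open_vimage by blast
  moreover have "holo_map (\<lambda>u. ginv (fi u)) ((\<lambda>z. finv (g z)) ` P)"
    by (rule holo_map_compose[OF holo_map_subset[OF Ui(3)] ginv(1)]) (auto simp: image)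
  moreover have "\<forall>x\<in>P. ginv (fi (finv (g x))) = x"
    using g_eq ginv(2) unfolding P_def by auto
  moreover have "(\<lambda>z. finv (g z)) ` P \<subseteq> Ui"
    unfolding image by blast
  moreover have "stein_open P"
    unfolding P_def by (rule stein_open_pullback[OF fi g finv])
  ultimately show ?thesis
    unfolding hemb_def P_def[symmetric] using Ui(1) by blast
qed

lemma is_pullback_canonical:
  assumes fi: "hemb Ui U fi" and g: "hemb V U g"
    and finv: "holo_map finv (fi ` Ui)" "\<forall>x\<in>Ui. finv (fi x) = x"
  shows "is_pullback U Ui fi V g {v \<in> V. g v \<in> fi ` Ui} (\<lambda>z. finv (g z)) (\<lambda>z. z)"
proof -
  define P where "P = {v \<in> V. g v \<in> fi ` Ui}"
  have "stein_open P"
    unfolding P_def by (rule stein_open_pullback[OF fi g finv])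
  then have incl: "hemb P V (\<lambda>z. z)"
    using hemb_inclusion g unfolding hemb_def P_def by blast
  have "\<exists>h. hemb W P h \<and> (\<forall>x\<in>W. finv (g (h x)) = g1 x) \<and> (\<forall>x\<in>W. h x = g2 x) \<and>
          (\<forall>h'. hemb W P h' \<and> (\<forall>x\<in>W. finv (g (h' x)) = g1 x) \<and> (\<forall>x\<in>W. h' x = g2 x)
                \<longrightarrow> (\<forall>x\<in>W. h' x = h x))"
    if g1: "hemb W Ui g1" and g2: "hemb W V g2" and comm: "\<forall>x\<in>W. fi (g1 x) = g (g2 x)"
    for W g1 g2
  proof (intro exI[where x = g2] conjI)
    have "g1 ` W \<subseteq> Ui" "g2 ` W \<subseteq> V"
      using g1 g2 unfolding hemb_def by auto
    then have "g2 ` W \<subseteq> P"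
      using comm unfolding P_def by (auto intro!: image_eqI)
    then show "hemb W P g2"
      using hemb_restrict_codomain[OF g2 \<open>stein_open P\<close>] by blast
    show "\<forall>x\<in>W. finv (g (g2 x)) = g1 x"
      using comm finv(2) \<open>g1 ` W \<subseteq> Ui\<close> by (metis image_subset_iff)
  qed auto
  moreover have "\<forall>x\<in>P. fi (finv (g x)) = g x"
    using finv(2) unfolding P_def by auto
  ultimately show ?thesis
    unfolding is_pullback_def P_def[symmetric]
    using fi g incl hemb_pullback_proj[OF fi g finv] unfolding P_def by blast
qed

text \<open>The canonical pullback factors through any other one.\<close>

lemma pullback_proj_image:
  assumes pb: "is_pullback U Ui fi V g P p1 p2" and v: "v \<in> V" "g v \<in> fi ` Ui"
  shows "v \<in> p2 ` P"
proof -
  have fi: "hemb Ui U fi" and g: "hemb V U g"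
    using pb unfolding is_pullback_def by auto
  obtain finv where finv: "holo_map finv (fi ` Ui)" "\<forall>x\<in>Ui. finv (fi x) = x"
    using fi unfolding hemb_def by blast
  define P0 where "P0 = {v \<in> V. g v \<in> fi ` Ui}"
  have "hemb P0 Ui (\<lambda>z. finv (g z))" "hemb P0 V (\<lambda>z. z)" "\<forall>x\<in>P0. fi (finv (g x)) = g x"
    using is_pullback_canonical[OF fi g finv] unfolding is_pullback_def P0_def by auto
  then obtain h where h: "hemb P0 P h" "\<forall>x\<in>P0. p2 (h x) = x"
    using pb unfolding is_pullback_def by blast
  have "v \<in> P0"
    using v unfolding P0_def by blast
  then show ?thesis
    using h unfolding hemb_def by (metis image_eqI image_subset_iff)
qed

lemma StC_site_iso_holds: "StC_site_iso TYPE('n::finite)"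
  unfolding StC_site_iso_def
proof (intro allI impI)
  fix U' U :: "'n cpt set" and f
  assume "hiso U' U f"
  then obtain g where f: "hemb U' U f" and g: "hemb U U' g" and gf: "\<forall>x\<in>U'. g (f x) = x"
    unfolding hiso_def by blast
  show "covering U {(U', f)}"
    using covering_singleton[OF f] hemb_section_surj[OF g f gf] by simp
qed

lemma StC_site_comp_holds: "StC_site_comp TYPE('n::finite)"
  unfolding StC_site_comp_def
proof (intro allI impI)
  fix U :: "'n cpt set" and F G
  assume "covering U F \<and> (\<forall>(Ui, fi)\<in>F. covering Ui (G (Ui, fi)))"
  then have F: "covering U F" and G: "\<forall>(Ui, fi)\<in>F. covering Ui (G (Ui, fi))"
    by auto
  define FG where "FG = {(W, fi \<circ> g) | Ui fi W g. (Ui, fi) \<in> F \<and> (W, g) \<in> G (Ui, fi)}"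
  have memb: "hemb W U h" if "(W, h) \<in> FG" for W h
  proof -
    from \<open>(W, h) \<in> FG\<close> obtain Ui fi g where m: "h = fi \<circ> g" "(Ui, fi) \<in> F" "(W, g) \<in> G (Ui, fi)"
      unfolding FG_def by blast
    have "hemb Ui U fi" "hemb W Ui g"
      using F G m(2,3) unfolding covering_def by fastforce+
    then show ?thesis
      using hemb_compose m(1) by (simp add: o_def)
  qed
  have "U \<subseteq> (\<Union>(W, h)\<in>FG. h ` W)"
  proof
    fix y assume "y \<in> U"
    then obtain Ui fi u where m: "(Ui, fi) \<in> F" "u \<in> Ui" "y = fi u"
      using F unfolding covering_def by auto
    then obtain W g where "(W, g) \<in> G (Ui, fi)" "u \<in> g ` W"
      using G unfolding covering_def by fastforce
    then show "y \<in> (\<Union>(W, h)\<in>FG. h ` W)"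
      unfolding FG_def using m by force
  qed
  then have "covering U FG"
    using F memb unfolding covering_def hemb_def by fast
  then show "covering U {(W, fi \<circ> g) | Ui fi W g. (Ui, fi) \<in> F \<and> (W, g) \<in> G (Ui, fi)}"
    unfolding FG_def .
qed

lemma StC_site_pullback_holds: "StC_site_pullback TYPE('n::finite)"
  unfolding StC_site_pullback_def
proof (intro allI impI conjI)
  fix U V :: "'n cpt set" and F g
  assume "covering U F \<and> hemb V U g"
  then have F: "covering U F" and g: "hemb V U g"
    by auto
  have fi: "hemb Ui U fi" if "(Ui, fi) \<in> F" for Ui fi
    using F that unfolding covering_def by auto
  show "\<forall>(Ui, fi)\<in>F. \<exists>P p1 p2. is_pullback U Ui fi V g P p1 p2"
  proof clarify
    fix Ui fi assume "(Ui, fi) \<in> F"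
    then obtain finv where "holo_map finv (fi ` Ui)" "\<forall>x\<in>Ui. finv (fi x) = x"
      using fi unfolding hemb_def by blast
    then show "\<exists>P p1 p2. is_pullback U Ui fi V g P p1 p2"
      using is_pullback_canonical[OF fi[OF \<open>(Ui, fi) \<in> F\<close>] g] by blast
  qed
  fix P p1 p2
  assume pb: "\<forall>(Ui, fi)\<in>F. is_pullback U Ui fi V g (P (Ui, fi)) (p1 (Ui, fi)) (p2 (Ui, fi))"
  define Fam where "Fam = {(P (Ui, fi), p2 (Ui, fi)) | Ui fi. (Ui, fi) \<in> F}"
  have memb: "hemb W V h" if "(W, h) \<in> Fam" for W h
    using that pb unfolding Fam_def is_pullback_def by blast
  have "V \<subseteq> (\<Union>(W, h)\<in>Fam. h ` W)"
  proof
    fix v assume "v \<in> V"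
    then have "g v \<in> U"
      using g unfolding hemb_def by auto
    then obtain Ui fi where "(Ui, fi) \<in> F" "g v \<in> fi ` Ui"
      using F unfolding covering_def by auto
    then have "v \<in> p2 (Ui, fi) ` P (Ui, fi)"
      using pullback_proj_image pb \<open>v \<in> V\<close> by blast
    then show "v \<in> (\<Union>(W, h)\<in>Fam. h ` W)"
      unfolding Fam_def using \<open>(Ui, fi) \<in> F\<close> by blast
  qed
  then have "covering V Fam"
    using g memb unfolding covering_def hemb_def by fast
  then show "covering V {(P (Ui, fi), p2 (Ui, fi)) | Ui fi. (Ui, fi) \<in> F}"
    unfolding Fam_def .
qed

lemma StC_verdier_diag_holds: "StC_verdier_diag TYPE('n::finite)"
  unfolding StC_verdier_diag_def
proof (intro allI impI)
  fix V U P :: "'n cpt set" and f p1 p2 d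
  assume "basal V U f \<and> is_pullback U V f V f P p1 p2 \<and> hemb V P d \<and>
     (\<forall>x\<in>V. p1 (d x) = x) \<and> (\<forall>x\<in>V. p2 (d x) = x)"
  then have p2: "hemb P V p2" and d: "hemb V P d" and "\<forall>x\<in>V. p2 (d x) = x"
    unfolding is_pullback_def by auto
  then have "covering P {(V, d)}"
    using covering_singleton hemb_section_surj by blast
  then show "basal V P d"
    unfolding basal_def by blast
qed

theorem lemma1p3:
  shows "StC_verdier_site TYPE('n::finite)"
  unfolding StC_verdier_site_def
  using StC_site_iso_holds StC_site_comp_holds StC_site_pullback_holds StC_verdier_diag_holds
  by blast

end
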